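(* Let $E$ be a finite nonempty set, $f:2^E\to\mathbb{N}$ an integral polymatroid rank function, $\vec t\in\mathbb{N}^E$, and let $C_e:\mathbb{N}\times\mathbb{N}\to\mathbb{R}_+$, $e\in E$, be regular functions. Let $D\subseteq\mathbb{N}$ be a set of integers with $\mathbb{B}_f(d)\neq\emptyset$ for all $d\in D$. Then for every $d,d'\in D$ with $|d-d'|=1$ and every optimal solution $\vec x^*(\vec t,d)$ of $P(\vec t,d)$, there is an optimal solution $\vec x^*(\vec t,d')$ of $P(\vec t,d')$ with $\|\vec x^*(\vec t,d)-\vec x^*(\vec t,d')\|\le |d-d'|=1$.
   Context: $\mathbb{N}=\{0,1,2,\dots\}$. A set function $f:2^E\to\mathbb{N}$ is an integral polymatroid rank function if $f(\emptyset)=0$, $f$ is monotone and submodular. For $\vec x\in\mathbb{N}^E$, $x(U)=\sum_{e\in U}x_e$; $\mathbb{B}_f(d)=\{\vec x\in\mathbb{N}^E: x(U)\le f(U)\ \forall U\subseteq E,\ x(E)=d\}$. $P(\vec t,d)$: minimize $\sum_{e\in E}C_e(x_e;t_e)$ subject to $\vec x\in\mathbb{B}_f(d)$. $\|\cdot\|$ is the $L_1$-norm. For $C:\mathbb{N}\times\mathbb{N}\to\mathbb{R}$, $C^-(x;t)=C(x;t)-C(x-1;t)$ for $x\ge1$; $C$ is regular if $C^-(x;t)\le C^-(x;t+1)$ and $C^-(x;t+1)\le C^-(x+1;t)$ for all $x\ge1$, $t\in\mathbb{N}$. *)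

theory Defs
  imports Complex_Main
begin

definition polymatroid_rank :: "'a set \<Rightarrow> ('a set \<Rightarrow> nat) \<Rightarrow> bool" where
  "polymatroid_rank E f \<longleftrightarrow>
     f {} = 0 \<and>
     (\<forall>U V. U \<subseteq> V \<and> V \<subseteq> E \<longrightarrow> f U \<le> f V) \<and>
     (\<forall>U V. U \<subseteq> E \<and> V \<subseteq> E \<longrightarrow> f (U \<union> V) + f (U \<inter> V) \<le> f U + f V)"

text \<open>Integer vectors in N^E are functions vanishing outside E.\<close>
definition base_set :: "'a set \<Rightarrow> ('a set \<Rightarrow> nat) \<Rightarrow> nat \<Rightarrow> ('a \<Rightarrow> nat) set" where
  "base_set E f d = {x. (\<forall>e. e \<notin> E \<longrightarrow> x e = 0) \<and>
                        (\<forall>U. U \<subseteq> E \<longrightarrow> (\<Sum>e\<in>U. x e) \<le> f U) \<and>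
                        (\<Sum>e\<in>E. x e) = d}"

definition marg :: "(nat \<Rightarrow> nat \<Rightarrow> real) \<Rightarrow> nat \<Rightarrow> nat \<Rightarrow> real" where
  "marg C x t = C x t - C (x - 1) t"

definition regular :: "(nat \<Rightarrow> nat \<Rightarrow> real) \<Rightarrow> bool" where
  "regular C \<longleftrightarrow> (\<forall>x t. x \<ge> 1 \<longrightarrow>
      marg C x t \<le> marg C x (t + 1) \<and> marg C x (t + 1) \<le> marg C (x + 1) t)"

definition total_cost :: "'a set \<Rightarrow> ('a \<Rightarrow> nat \<Rightarrow> nat \<Rightarrow> real) \<Rightarrow> ('a \<Rightarrow> nat) \<Rightarrow> ('a \<Rightarrow> nat) \<Rightarrow> real" where
  "total_cost E C t x = (\<Sum>e\<in>E. C e (x e) (t e))"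

definition optimal :: "'a set \<Rightarrow> ('a set \<Rightarrow> nat) \<Rightarrow> ('a \<Rightarrow> nat \<Rightarrow> nat \<Rightarrow> real) \<Rightarrow> ('a \<Rightarrow> nat) \<Rightarrow> nat \<Rightarrow> ('a \<Rightarrow> nat) \<Rightarrow> bool" where
  "optimal E f C t d x \<longleftrightarrow> x \<in> base_set E f d \<and>
     (\<forall>y\<in>base_set E f d. total_cost E C t x \<le> total_cost E C t y)"

definition l1_dist :: "'a set \<Rightarrow> ('a \<Rightarrow> nat) \<Rightarrow> ('a \<Rightarrow> nat) \<Rightarrow> int" where
  "l1_dist E x y = (\<Sum>e\<in>E. \<bar>int (x e) - int (y e)\<bar>)"

end

theory Submission
  imports Defs
begin

text \<open>Let \<open>x\<close> be a base of size \<open>k\<close> and \<open>y\<close> one of size \<open>k + 1\<close>, and pick \<open>e\<close> with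
  \<open>x e < y e\<close>. If no \<open>x\<close>-tight set contains \<open>e\<close>, move one unit at \<open>e\<close> from \<open>y\<close> to \<open>x\<close>.
  Otherwise take the least \<open>x\<close>-tight set \<open>T\<close> containing \<open>e\<close> and the greatest \<open>y\<close>-tight set
  \<open>W\<close> avoiding \<open>e\<close> (tight sets form a lattice by submodularity); some \<open>e' \<in> T - W\<close> has
  \<open>y e' < x e'\<close>, and trading units at \<open>e\<close> and \<open>e'\<close> keeps both vectors feasible while
  bringing each closer to the other. Regularity makes marginal costs nondecreasing, so in
  both cases the total cost of the pair does not increase. Starting from an optimum \<open>x\<close> for
  \<open>d\<close> and an optimum for \<open>d'\<close> closest to \<open>x\<close>, the exchange therefore yields an optimum
  for \<open>d'\<close> within distance 1 of \<open>x\<close>.\<close>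

definition polytope :: "'a set \<Rightarrow> ('a set \<Rightarrow> nat) \<Rightarrow> ('a \<Rightarrow> nat) set" where
  "polytope E f = {x. (\<forall>e. e \<notin> E \<longrightarrow> x e = 0) \<and> (\<forall>U. U \<subseteq> E \<longrightarrow> sum x U \<le> f U)}"

definition tight :: "'a set \<Rightarrow> ('a set \<Rightarrow> nat) \<Rightarrow> ('a \<Rightarrow> nat) \<Rightarrow> 'a set \<Rightarrow> bool" where
  "tight E f x U \<longleftrightarrow> U \<subseteq> E \<and> sum x U = f U"

lemma base_set_iff: "x \<in> base_set E f d \<longleftrightarrow> x \<in> polytope E f \<and> sum x E = d"
  unfolding base_set_def polytope_def by auto

lemma polytope_vanishes: "x \<in> polytope E f \<Longrightarrow> e \<notin> E \<Longrightarrow> x e = 0"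
  unfolding polytope_def by auto

lemma polytope_bound: "x \<in> polytope E f \<Longrightarrow> U \<subseteq> E \<Longrightarrow> sum x U \<le> f U"
  unfolding polytope_def by auto

lemma sum_fun_upd:
  fixes F :: "'a \<Rightarrow> 'b \<Rightarrow> 'c::comm_monoid_add"
  assumes "finite U"
  shows "(\<Sum>j\<in>U. F j ((x(i := c)) j)) + (if i \<in> U then F i (x i) else 0)
       = (\<Sum>j\<in>U. F j (x j)) + (if i \<in> U then F i c else 0)"
proof (cases "i \<in> U")
  case True
  have "(\<Sum>j\<in>U - {i}. F j ((x(i := c)) j)) = (\<Sum>j\<in>U - {i}. F j (x j))"
    by (rule sum.cong) auto
  then show ?thesis
    using True sum.remove[OF assms True, of "\<lambda>j. F j ((x(i := c)) j)"]
      sum.remove[OF assms True, of "\<lambda>j. F j (x j)"]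
    by (simp add: ac_simps)
qed (auto intro: sum.cong)

lemma sum_fun_upd_diff:
  fixes F :: "'a \<Rightarrow> 'b \<Rightarrow> 'c::ab_group_add"
  assumes "finite U" "i \<in> U"
  shows "(\<Sum>j\<in>U. F j ((x(i := c)) j)) = (\<Sum>j\<in>U. F j (x j)) + F i c - F i (x i)"
  using sum_fun_upd[OF assms(1), of F x i c] assms(2) by (simp add: algebra_simps)

lemma sum_increment:
  fixes x :: "'a \<Rightarrow> nat"
  assumes "finite U"
  shows "sum (x(i := x i + 1)) U = sum x U + (if i \<in> U then 1 else 0)"
  using sum_fun_upd[OF assms, of "\<lambda>_ n. n" x i "x i + 1"]
  by (cases "i \<in> U") (simp_all del: fun_upd_apply)

lemma sum_decrement:
  fixes x :: "'a \<Rightarrow> nat"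
  assumes "finite U" "0 < x i"
  shows "sum (x(i := x i - 1)) U + (if i \<in> U then 1 else 0) = sum x U"
  using sum_fun_upd[OF assms(1), of "\<lambda>_ n. n" x i "x i - 1"] assms(2)
  by (cases "i \<in> U") (simp_all del: fun_upd_apply)

lemma total_cost_fun_upd:
  "finite E \<Longrightarrow> i \<in> E \<Longrightarrow>
     total_cost E C t (x(i := c)) = total_cost E C t x + C i c (t i) - C i (x i) (t i)"
  unfolding total_cost_def using sum_fun_upd_diff[of E i "\<lambda>j n. C j n (t j)" x c] by simp

lemma l1_dist_fun_upd:
  "finite E \<Longrightarrow> i \<in> E \<Longrightarrow>
     l1_dist E u (x(i := c)) = l1_dist E u x + \<bar>int (u i) - int c\<bar> - \<bar>int (u i) - int (x i)\<bar>"
  unfolding l1_dist_def using sum_fun_upd_diff[of E i "\<lambda>j n. \<bar>int (u j) - int n\<bar>" x c] by simp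

lemma total_cost_increment:
  "finite E \<Longrightarrow> e \<in> E \<Longrightarrow>
     total_cost E C t (x(e := x e + 1)) = total_cost E C t x + marg (C e) (x e + 1) (t e)"
  using total_cost_fun_upd[of E e C t x "x e + 1"] by (simp add: marg_def)

text \<open>No hypothesis \<open>0 < x e\<close> is needed: truncated subtraction makes \<open>marg C 0 = 0\<close>.\<close>
lemma total_cost_decrement:
  "finite E \<Longrightarrow> e \<in> E \<Longrightarrow>
     total_cost E C t (x(e := x e - 1)) = total_cost E C t x - marg (C e) (x e) (t e)"
  using total_cost_fun_upd[of E e C t x "x e - 1"] by (simp add: marg_def)

lemma l1_dist_self: "l1_dist E x x = 0"
  unfolding l1_dist_def by simp

lemma l1_dist_increment_toward:
  "finite E \<Longrightarrow> e \<in> E \<Longrightarrow> x e < u e \<Longrightarrow> l1_dist E u (x(e := x e + 1)) = l1_dist E u x - 1"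
  using l1_dist_fun_upd[of E e u x "x e + 1"] by simp

lemma l1_dist_decrement_toward:
  "finite E \<Longrightarrow> e \<in> E \<Longrightarrow> u e < x e \<Longrightarrow> l1_dist E u (x(e := x e - 1)) = l1_dist E u x - 1"
  using l1_dist_fun_upd[of E e u x "x e - 1"] by simp

lemma l1_dist_nonneg: "0 \<le> l1_dist E x y"
  unfolding l1_dist_def by (simp add: sum_nonneg)

lemma marg_mono:
  assumes "regular C" "1 \<le> x" "x \<le> y"
  shows "marg C x s \<le> marg C y s"
  using assms(3)
proof (induction y rule: dec_induct)
  case (step n)
  have "marg C n s \<le> marg C n (s + 1)" "marg C n (s + 1) \<le> marg C (n + 1) s"
    using assms(1,2) step(1) unfolding regular_def by auto
  then show ?case using step by simp
qed simp

lemma ex_least_Int_closed: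
  assumes "P U" and "\<And>A. P A \<Longrightarrow> finite A"
    and "\<And>A B. P A \<Longrightarrow> P B \<Longrightarrow> P (A \<inter> B)"
  shows "\<exists>T. P T \<and> (\<forall>W. P W \<longrightarrow> T \<subseteq> W)"
proof -
  obtain T where T: "P T" and least: "\<And>W. P W \<Longrightarrow> card T \<le> card W"
    using ex_has_least_nat[of P U card] assms(1) by blast
  have "T \<subseteq> W" if "P W" for W
  proof -
    have "card T \<le> card (T \<inter> W)" using least assms(3)[OF T that] .
    then have "T \<inter> W = T"
      using card_subset_eq[OF assms(2)[OF T], of "T \<inter> W"] card_mono[OF assms(2)[OF T], of "T \<inter> W"]
      by auto
    then show ?thesis by blast
  qed
  then show ?thesis using T by blast
qed

lemma ex_greatest_Un_closed:
  assumes "finite E" "P U" and "\<And>A. P A \<Longrightarrow> A \<subseteq> E"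
    and "\<And>A B. P A \<Longrightarrow> P B \<Longrightarrow> P (A \<union> B)"
  shows "\<exists>G. P G \<and> (\<forall>W. P W \<longrightarrow> W \<subseteq> G)"
proof -
  let ?Q = "\<lambda>A. A \<subseteq> E \<and> P (E - A)"
  have "?Q (E - U)" using assms(2,3) by (simp add: double_diff)
  moreover have "?Q (A \<inter> B)" if "?Q A" "?Q B" for A B
    using assms(4)[of "E - A" "E - B"] that by (auto simp: Diff_Int)
  ultimately obtain T where T: "?Q T" and least: "\<And>W. ?Q W \<Longrightarrow> T \<subseteq> W"
    using ex_least_Int_closed[of ?Q "E - U"] assms(1) finite_subset by metis
  have "W \<subseteq> E - T" if "P W" for W
    using least[of "E - W"] assms(3)[OF that] that by (auto simp: double_diff)
  then show ?thesis using T by blast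
qed

lemma tight_Un_Int:
  assumes "polymatroid_rank E f" "finite E" "x \<in> polytope E f" "tight E f x A" "tight E f x B"
  shows "tight E f x (A \<union> B) \<and> tight E f x (A \<inter> B)"
proof -
  have AB: "A \<subseteq> E" "B \<subseteq> E" "sum x A = f A" "sum x B = f B"
    using assms(4,5) unfolding tight_def by auto
  have "sum x (A \<union> B) + sum x (A \<inter> B) = sum x A + sum x B"
    using sum.union_inter AB(1,2) assms(2) finite_subset by metis
  moreover have "f (A \<union> B) + f (A \<inter> B) \<le> f A + f B"
    using assms(1) AB(1,2) unfolding polymatroid_rank_def by auto
  moreover have "sum x (A \<union> B) \<le> f (A \<union> B)" "sum x (A \<inter> B) \<le> f (A \<inter> B)"
    using polytope_bound[OF assms(3), of "A \<union> B"] polytope_bound[OF assms(3), of "A \<inter> B"] AB(1,2)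
    by auto
  ultimately show ?thesis using AB unfolding tight_def by auto
qed

lemma polytope_increment:
  assumes "x \<in> polytope E f" "finite E" "i \<in> E" "\<And>U. tight E f x U \<Longrightarrow> i \<notin> U"
  shows "x(i := x i + 1) \<in> polytope E f"
  unfolding polytope_def
proof safe
  fix U assume U: "U \<subseteq> E"
  have "sum x U \<le> f U" "i \<in> U \<Longrightarrow> sum x U \<noteq> f U"
    using polytope_bound[OF assms(1) U] assms(4) U unfolding tight_def by auto
  then show "sum (x(i := x i + 1)) U \<le> f U"
    using sum_increment[OF finite_subset[OF U assms(2)]] by auto
qed (use assms(1,3) polytope_vanishes in auto)

lemma polytope_decrement:
  assumes "x \<in> polytope E f" "finite E"
  shows "x(i := x i - 1) \<in> polytope E f"
  unfolding polytope_def
proof safe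
  fix U assume U: "U \<subseteq> E"
  have "sum (x(i := x i - 1)) U \<le> sum x U"
    by (rule sum_mono) auto
  then show "sum (x(i := x i - 1)) U \<le> f U"
    using polytope_bound[OF assms(1) U] by linarith
qed (use polytope_vanishes[OF assms(1)] in auto)

text \<open>The only sets whose sum grows contain \<open>i\<close> but not \<open>j\<close>, so they are not tight.\<close>
lemma polytope_transfer:
  assumes "x \<in> polytope E f" "finite E" "i \<in> E" "i \<noteq> j" "0 < x j"
    and "\<And>U. tight E f x U \<Longrightarrow> i \<in> U \<Longrightarrow> j \<in> U"
  shows "x(i := x i + 1, j := x j - 1) \<in> polytope E f"
    and "sum (x(i := x i + 1, j := x j - 1)) E = sum x E"
proof -
  let ?y = "x(i := x i + 1, j := x j - 1)"
  have jE: "j \<in> E" using assms(1,5) polytope_vanishes by fastforce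
  have sum_y: "sum ?y U + (if j \<in> U then 1 else 0) = sum x U + (if i \<in> U then 1 else 0)"
    if "finite U" for U
    using sum_decrement[OF that, of "x(i := x i + 1)" j] sum_increment[OF that, of x i] assms(4,5)
    by simp
  show "?y \<in> polytope E f"
    unfolding polytope_def
  proof safe
    fix U assume U: "U \<subseteq> E"
    have "sum x U \<le> f U" using polytope_bound[OF assms(1) U] .
    moreover have "sum x U \<noteq> f U" if "i \<in> U" "j \<notin> U"
      using assms(6) U that unfolding tight_def by auto
    ultimately show "sum ?y U \<le> f U"
      using sum_y[OF finite_subset[OF U assms(2)]] by (auto split: if_splits)
  qed (use assms(1,3) jE polytope_vanishes in auto)
  show "sum ?y E = sum x E" using sum_y[OF assms(2)] assms(3) jE by simp
qed

text \<open>Otherwise \<open>u \<le> v\<close> on \<open>T - W\<close>, strictly at \<open>e\<close>, and then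
  \<open>v(T \<union> W) + u(T \<inter> W) > v(W) + u(T) = f W + f T\<close>, contradicting submodularity.\<close>
lemma ex_decrease_outside_tight:
  assumes pm: "polymatroid_rank E f" and fin: "finite E"
    and u: "u \<in> polytope E f" and v: "v \<in> polytope E f"
    and T: "tight E f u T" and W: "tight E f v W"
    and e: "e \<in> T" "e \<notin> W" "u e < v e"
  shows "\<exists>e'\<in>T - W. v e' < u e'"
proof (rule ccontr)
  assume "\<not> ?thesis"
  then have le: "\<forall>i\<in>T - W. u i \<le> v i" by force
  have TW: "T \<subseteq> E" "W \<subseteq> E" "sum u T = f T" "sum v W = f W"
    using T W unfolding tight_def by auto
  have finTW: "finite (T - W)" "finite T" "finite W"
    using TW(1,2) fin by (auto intro: finite_subset)
  have "sum u (T - W) < sum v (T - W)"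
    using sum_strict_mono_ex1[OF finTW(1) le] e by auto
  moreover have "f (T \<union> W) + f (T \<inter> W) \<le> f T + f W"
    using pm TW(1,2) unfolding polymatroid_rank_def by auto
  moreover have "sum v (T \<union> W) \<le> f (T \<union> W)" "sum u (T \<inter> W) \<le> f (T \<inter> W)"
    using polytope_bound[OF v, of "T \<union> W"] polytope_bound[OF u, of "T \<inter> W"] TW(1,2) by auto
  moreover have "sum v (T \<union> W) = sum v W + sum v (T - W)"
    using sum.union_disjoint[of W "T - W" v] finTW by (simp add: Un_commute Un_Diff_cancel2)
  moreover have "sum u T = sum u (T \<inter> W) + sum u (T - W)"
    using sum.Int_Diff[OF finTW(2), of u W] .
  ultimately show False using TW(3,4) by linarith
qed

lemma ex_exchange_partner:
  assumes pm: "polymatroid_rank E f" and fin: "finite E"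
    and u: "u \<in> polytope E f" and v: "v \<in> polytope E f"
    and e: "u e < v e" and U: "tight E f u U" "e \<in> U"
  shows "\<exists>e'\<in>E. e' \<noteq> e \<and> v e' < u e' \<and>
           (\<forall>U. tight E f u U \<longrightarrow> e \<in> U \<longrightarrow> e' \<in> U) \<and>
           (\<forall>U. tight E f v U \<longrightarrow> e' \<in> U \<longrightarrow> e \<in> U)"
proof -
  have tight_finite: "finite A" if "tight E f x A" for x A
    using that fin finite_subset unfolding tight_def by auto
  have "\<exists>T. (tight E f u T \<and> e \<in> T) \<and> (\<forall>A. tight E f u A \<and> e \<in> A \<longrightarrow> T \<subseteq> A)"
    by (rule ex_least_Int_closed) (use U tight_finite tight_Un_Int[OF pm fin u] in auto)
  then obtain T where T: "tight E f u T" "e \<in> T"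
    and T_least: "\<And>A. tight E f u A \<Longrightarrow> e \<in> A \<Longrightarrow> T \<subseteq> A"
    by blast
  have empty_tight: "tight E f v {}"
    using pm unfolding tight_def polymatroid_rank_def by simp
  have "\<exists>W. (tight E f v W \<and> e \<notin> W) \<and> (\<forall>A. tight E f v A \<and> e \<notin> A \<longrightarrow> A \<subseteq> W)"
    by (rule ex_greatest_Un_closed[OF fin, where U = "{}"])
      (use empty_tight tight_Un_Int[OF pm fin v] in \<open>auto simp: tight_def\<close>)
  then obtain W where W: "tight E f v W" "e \<notin> W"
    and W_greatest: "\<And>A. tight E f v A \<Longrightarrow> e \<notin> A \<Longrightarrow> A \<subseteq> W"
    by blast
  obtain e' where e': "e' \<in> T - W" "v e' < u e'"
    using ex_decrease_outside_tight[OF pm fin u v T(1) W(1) T(2) W(2) e] by blast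
  have "e' \<in> E" using e'(1) T(1) unfolding tight_def by auto
  moreover have "e' \<in> A" if "tight E f u A" "e \<in> A" for A
    using T_least[OF that] e'(1) by auto
  moreover have "e \<in> A" if "tight E f v A" "e' \<in> A" for A
    using W_greatest[OF that(1)] that(2) e'(1) by auto
  moreover have "e' \<noteq> e" using e e'(2) by auto
  ultimately show ?thesis using e'(2) by blast
qed

lemma exchange_free:
  assumes fin: "finite E" and reg: "regular (C e)"
    and u: "u \<in> base_set E f k" and v: "v \<in> base_set E f (Suc k)"
    and e: "e \<in> E" "u e < v e" and free: "\<And>U. tight E f u U \<Longrightarrow> e \<notin> U"
  shows "u(e := u e + 1) \<in> base_set E f (Suc k)" and "v(e := v e - 1) \<in> base_set E f k"
    and "total_cost E C t (u(e := u e + 1)) + total_cost E C t (v(e := v e - 1))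
           \<le> total_cost E C t u + total_cost E C t v"
    and "l1_dist E u (u(e := u e + 1)) = 1" and "l1_dist E v (v(e := v e - 1)) = 1"
proof -
  have uP: "u \<in> polytope E f" "sum u E = k" and vP: "v \<in> polytope E f" "sum v E = Suc k"
    using u v unfolding base_set_iff by auto
  show "u(e := u e + 1) \<in> base_set E f (Suc k)"
    using polytope_increment[OF uP(1) fin e(1) free] sum_increment[OF fin, of u e] uP(2) e(1)
    unfolding base_set_iff by simp
  show "v(e := v e - 1) \<in> base_set E f k"
    using polytope_decrement[OF vP(1) fin] sum_decrement[OF fin, of v e] vP(2) e
    unfolding base_set_iff by simp
  have "marg (C e) (u e + 1) (t e) \<le> marg (C e) (v e) (t e)"
    using marg_mono[OF reg] e(2) by simp
  then show "total_cost E C t (u(e := u e + 1)) + total_cost E C t (v(e := v e - 1))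
      \<le> total_cost E C t u + total_cost E C t v"
    using total_cost_increment[OF fin e(1)] total_cost_decrement[OF fin e(1)] by simp
  show "l1_dist E u (u(e := u e + 1)) = 1" "l1_dist E v (v(e := v e - 1)) = 1"
    using l1_dist_fun_upd[OF fin e(1)] l1_dist_self e(2) by auto
qed

lemma exchange_tight:
  assumes fin: "finite E" and reg: "\<And>i. i \<in> E \<Longrightarrow> regular (C i)"
    and u: "u \<in> base_set E f k" and v: "v \<in> base_set E f (Suc k)"
    and e: "e \<in> E" "u e < v e" and e': "e' \<in> E" "e' \<noteq> e" "v e' < u e'"
    and tight_u: "\<And>U. tight E f u U \<Longrightarrow> e \<in> U \<Longrightarrow> e' \<in> U"
    and tight_v: "\<And>U. tight E f v U \<Longrightarrow> e' \<in> U \<Longrightarrow> e \<in> U"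
  shows "v(e' := v e' + 1, e := v e - 1) \<in> base_set E f (Suc k)"
    and "u(e := u e + 1, e' := u e' - 1) \<in> base_set E f k"
    and "total_cost E C t (v(e' := v e' + 1, e := v e - 1))
           + total_cost E C t (u(e := u e + 1, e' := u e' - 1))
         \<le> total_cost E C t u + total_cost E C t v"
    and "l1_dist E u (v(e' := v e' + 1, e := v e - 1)) < l1_dist E u v"
    and "l1_dist E v (u(e := u e + 1, e' := u e' - 1)) < l1_dist E v u"
proof -
  let ?a = "v(e' := v e' + 1, e := v e - 1)" and ?b = "u(e := u e + 1, e' := u e' - 1)"
  have uP: "u \<in> polytope E f" "sum u E = k" and vP: "v \<in> polytope E f" "sum v E = Suc k"
    using u v unfolding base_set_iff by auto
  show "?a \<in> base_set E f (Suc k)"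
    using polytope_transfer[OF vP(1) fin e'(1) e'(2)] e(2) tight_v vP(2)
    unfolding base_set_iff by simp
  show "?b \<in> base_set E f k"
    using polytope_transfer[OF uP(1) fin e(1) e'(2)[symmetric]] e'(3) tight_u uP(2)
    unfolding base_set_iff by simp
  have "total_cost E C t ?a
      = total_cost E C t v + marg (C e') (v e' + 1) (t e') - marg (C e) (v e) (t e)"
    using total_cost_increment[OF fin e'(1), of C t v]
      total_cost_decrement[OF fin e(1), of C t "v(e' := v e' + 1)"] e'(2) by simp
  moreover have "total_cost E C t ?b
      = total_cost E C t u + marg (C e) (u e + 1) (t e) - marg (C e') (u e') (t e')"
    using total_cost_increment[OF fin e(1), of C t u]
      total_cost_decrement[OF fin e'(1), of C t "u(e := u e + 1)"] e'(2) by simp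
  moreover have "marg (C e) (u e + 1) (t e) \<le> marg (C e) (v e) (t e)"
    using marg_mono[OF reg[OF e(1)]] e(2) by simp
  moreover have "marg (C e') (v e' + 1) (t e') \<le> marg (C e') (u e') (t e')"
    using marg_mono[OF reg[OF e'(1)]] e'(3) by simp
  ultimately show "total_cost E C t ?a + total_cost E C t ?b \<le> total_cost E C t u + total_cost E C t v"
    by simp
  show "l1_dist E u ?a < l1_dist E u v"
    using l1_dist_increment_toward[OF fin e'(1), of v u] e'(3)
      l1_dist_decrement_toward[OF fin e(1), of u "v(e' := v e' + 1)"] e(2) e'(2) by simp
  show "l1_dist E v ?b < l1_dist E v u"
    using l1_dist_increment_toward[OF fin e(1), of u v] e(2)
      l1_dist_decrement_toward[OF fin e'(1), of v "u(e := u e + 1)"] e'(2,3) by simp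
qed

lemma exchange:
  assumes pm: "polymatroid_rank E f" and fin: "finite E"
    and reg: "\<And>i. i \<in> E \<Longrightarrow> regular (C i)"
    and u: "u \<in> base_set E f k" and v: "v \<in> base_set E f (Suc k)"
  shows "\<exists>a b. a \<in> base_set E f (Suc k) \<and> b \<in> base_set E f k \<and>
           total_cost E C t a + total_cost E C t b \<le> total_cost E C t u + total_cost E C t v \<and>
           (l1_dist E u a \<le> 1 \<or> l1_dist E u a < l1_dist E u v) \<and>
           (l1_dist E v b \<le> 1 \<or> l1_dist E v b < l1_dist E v u)"
proof -
  have uP: "u \<in> polytope E f" "sum u E = k" and vP: "v \<in> polytope E f" "sum v E = Suc k"
    using u v unfolding base_set_iff by auto
  obtain e where e: "e \<in> E" "u e < v e"
    using uP(2) vP(2) sum_mono[of E v u] by (metis lessI not_le order.strict_trans1)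
  consider (free) "\<And>U. tight E f u U \<Longrightarrow> e \<notin> U" | (tight) U where "tight E f u U" "e \<in> U"
    by blast
  then show ?thesis
  proof cases
    case free
    show ?thesis
      using exchange_free[where C = C, OF fin reg[OF e(1)] u v e free] by fastforce
  next
    case tight
    then obtain e' where "e' \<in> E" "e' \<noteq> e" "v e' < u e'"
      and "\<And>U. tight E f u U \<Longrightarrow> e \<in> U \<Longrightarrow> e' \<in> U" "\<And>U. tight E f v U \<Longrightarrow> e' \<in> U \<Longrightarrow> e \<in> U"
      using ex_exchange_partner[OF pm fin uP(1) vP(1) e(2)] by blast
    from exchange_tight[where C = C, OF fin reg u v e this] show ?thesis by blast
  qed
qed

lemma finite_base_set: "finite E \<Longrightarrow> finite (base_set E f d)"
proof -
  assume fin: "finite E"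
  have "base_set E f d \<subseteq> {x. \<forall>e. (e \<in> E \<longrightarrow> x e \<in> {..d}) \<and> (e \<notin> E \<longrightarrow> x e = 0)}"
    using member_le_sum[OF _ _ fin] unfolding base_set_def by fastforce
  then show ?thesis
    using finite_set_of_finite_funs[OF fin finite_atMost] finite_subset by blast
qed

lemma ex_optimal:
  assumes "finite E" "base_set E f d \<noteq> {}"
  shows "\<exists>x. optimal E f C t d x"
  using ex_is_arg_min_if_finite[OF finite_base_set[OF assms(1)] assms(2), of "total_cost E C t"]
  unfolding optimal_def is_arg_min_def by (auto simp: not_less)

lemma optimal_of_exchange:
  assumes "optimal E f C t d x" "optimal E f C t d' y"
    and "a \<in> base_set E f d'" "b \<in> base_set E f d"
    and "total_cost E C t a + total_cost E C t b \<le> total_cost E C t x + total_cost E C t y"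
  shows "optimal E f C t d' a"
  using assms unfolding optimal_def by fastforce

lemma optimal_adjacent_exchange:
  assumes pm: "polymatroid_rank E f" and fin: "finite E"
    and reg: "\<And>i. i \<in> E \<Longrightarrow> regular (C i)"
    and dd': "\<bar>int d - int d'\<bar> = 1"
    and x: "optimal E f C t d x" and y: "optimal E f C t d' y"
  shows "\<exists>z. optimal E f C t d' z \<and> (l1_dist E x z \<le> 1 \<or> l1_dist E x z < l1_dist E x y)"
proof -
  have xB: "x \<in> base_set E f d" and yB: "y \<in> base_set E f d'"
    using x y unfolding optimal_def by auto
  show ?thesis
  proof (cases "d' = Suc d")
    case True
    then obtain a b where "a \<in> base_set E f d'" "b \<in> base_set E f d"
      "total_cost E C t a + total_cost E C t b \<le> total_cost E C t x + total_cost E C t y"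
      "l1_dist E x a \<le> 1 \<or> l1_dist E x a < l1_dist E x y"
      using exchange[where C = C and t = t, OF pm fin reg xB] yB by blast
    then show ?thesis using optimal_of_exchange[OF x y] by blast
  next
    case False
    then have "d = Suc d'" using dd' by linarith
    then obtain a b where "a \<in> base_set E f d" "b \<in> base_set E f d'"
      "total_cost E C t a + total_cost E C t b \<le> total_cost E C t y + total_cost E C t x"
      "l1_dist E x b \<le> 1 \<or> l1_dist E x b < l1_dist E x y"
      using exchange[where C = C and t = t, OF pm fin reg yB] xB by blast
    then show ?thesis using optimal_of_exchange[OF x y, of b a] by (auto simp: add.commute)
  qed
qed

theorem theorem3p4:
  fixes E :: "'a set" and f :: "'a set \<Rightarrow> nat" and t :: "'a \<Rightarrow> nat"
    and C :: "'a \<Rightarrow> nat \<Rightarrow> nat \<Rightarrow> real" and D :: "nat set"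
  assumes "finite E" and "E \<noteq> {}"
    and "polymatroid_rank E f"
    and "\<And>e x s. e \<in> E \<Longrightarrow> C e x s \<ge> 0"
    and "\<And>e. e \<in> E \<Longrightarrow> regular (C e)"
    and "\<And>d. d \<in> D \<Longrightarrow> base_set E f d \<noteq> {}"
  shows "\<forall>d\<in>D. \<forall>d'\<in>D. \<bar>int d - int d'\<bar> = 1 \<longrightarrow>
           (\<forall>x. optimal E f C t d x \<longrightarrow>
              (\<exists>x'. optimal E f C t d' x' \<and> l1_dist E x x' \<le> \<bar>int d - int d'\<bar>))"
proof (intro ballI impI allI)
  fix d d' x
  assume d': "d' \<in> D" and dd': "\<bar>int d - int d'\<bar> = 1" and x: "optimal E f C t d x"
  obtain y0 where "optimal E f C t d' y0"
    using ex_optimal[OF assms(1) assms(6)[OF d']] by blast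
  then obtain y where y: "optimal E f C t d' y"
    and closest: "\<And>z. optimal E f C t d' z \<Longrightarrow> nat (l1_dist E x y) \<le> nat (l1_dist E x z)"
    using ex_has_least_nat[of "optimal E f C t d'" y0 "\<lambda>z. nat (l1_dist E x z)"] by blast
  obtain z where z: "optimal E f C t d' z"
    and "l1_dist E x z \<le> 1 \<or> l1_dist E x z < l1_dist E x y"
    using optimal_adjacent_exchange[OF assms(3,1,5) dd' x y] by blast
  then have "l1_dist E x z \<le> 1"
    using closest[OF z] l1_dist_nonneg[of E x z] by linarith
  then show "\<exists>x'. optimal E f C t d' x' \<and> l1_dist E x x' \<le> \<bar>int d - int d'\<bar>"
    using z dd' by auto
qed

end
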